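(* Let $a_1,a_2\in\mathbb{R}$ and $C>0$, and let $$R=\begin{pmatrix} 1 & a_1 \\ a_2 & 1 \end{pmatrix},\qquad S=\begin{pmatrix} 1 & Ca_1 \\ a_2/C & 1 \end{pmatrix}.$$ Then the Skorokhod problem with matrix $R$ has a unique solution for every driving function if and only if the Skorokhod problem with matrix $S$ has a unique solution for every driving function.
   Context: For $b=(b_1,b_2)\in\mathbb{R}^2$ write $b\ge 0$ if $b_1\ge 0$ and $b_2\ge 0$, and let $D=\{b\in\mathbb{R}^2: b\ge 0\}$. A driving function is a continuous function $f:[0,\infty)\to\mathbb{R}^2$ with $f(0)\ge 0$. Given a real $2\times 2$ matrix $R$ and a driving function $f$, a solution of the Skorokhod problem is a pair $(g,m)$ where (1) $g:[0,\infty)\to D$ is continuous; (2) $m=(m_1,m_2):[0,\infty)\to\mathbb{R}^2$ is continuous with $m(0)=0$ and each $m_j$ non-decreasing; (3) $g(t)=f(t)+Rm(t)$ for all $t\ge 0$; and (4) for $j=1,2$, $m_j$ increases only when $g_j=0$, i.e. $\int_0^\infty g_j(t)\,dm_j(t)=0$. "Unique solution" means there is exactly one such pair $(g,m)$. *)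

theory Defs
  imports "HOL-Analysis.Analysis"
begin

definition nonneg2 :: "real^2 \<Rightarrow> bool" where
  "nonneg2 b \<longleftrightarrow> b $ 1 \<ge> 0 \<and> b $ 2 \<ge> 0"

definition driving_fun :: "(real \<Rightarrow> real^2) \<Rightarrow> bool" where
  "driving_fun f \<longleftrightarrow> continuous_on {0..} f \<and> nonneg2 (f 0)"

text \<open>Condition (4): m_j increases only when g_j = 0, i.e. on every interval
 [s,t] where g_j stays strictly positive, m_j is constant.  For continuous g and
 continuous nondecreasing m this is equivalent to the Stieltjes condition
 int g_j dm_j = 0.\<close>
definition skorokhod_sol ::
  "real^2^2 \<Rightarrow> (real \<Rightarrow> real^2) \<Rightarrow> (real \<Rightarrow> real^2) \<Rightarrow> (real \<Rightarrow> real^2) \<Rightarrow> bool" where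
  "skorokhod_sol R f g m \<longleftrightarrow>
     continuous_on {0..} g \<and> (\<forall>t\<ge>0. nonneg2 (g t)) \<and>
     continuous_on {0..} m \<and> m 0 = 0 \<and>
     (\<forall>j. \<forall>s t. 0 \<le> s \<and> s \<le> t \<longrightarrow> m s $ j \<le> m t $ j) \<and>
     (\<forall>t\<ge>0. g t = f t + R *v m t) \<and>
     (\<forall>j. \<forall>s t. 0 \<le> s \<and> s \<le> t \<and> (\<forall>u\<in>{s..t}. g u $ j > 0) \<longrightarrow> m s $ j = m t $ j)"

text \<open>Solutions are functions on [0,oo); we identify functions agreeing there.\<close>
definition unique_solution :: "real^2^2 \<Rightarrow> (real \<Rightarrow> real^2) \<Rightarrow> bool" where
  "unique_solution R f \<longleftrightarrow>
     (\<exists>g m. skorokhod_sol R f g m \<and>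
        (\<forall>g' m'. skorokhod_sol R f g' m' \<longrightarrow> (\<forall>t\<ge>0. g' t = g t \<and> m' t = m t)))"

definition mat2 :: "real \<Rightarrow> real \<Rightarrow> real \<Rightarrow> real \<Rightarrow> real^2^2" where
  "mat2 a b c d = (\<chi> i j. if i = 1 then (if j = 1 then a else b) else (if j = 1 then c else d))"

end

theory Submission
  imports Defs
begin

text \<open>For a diagonal matrix D with positive entries, (g, m) solves the Skorokhod problem for
  (R, f) iff (D g, D m) solves it for (D R D^-1, D f): all constraints other than
  g = f + R m are coordinatewise sign, order and equality conditions, which multiplication by
  positive scalars preserves. The matrix with entries 1, C a1, a2/C, 1 is D R D^-1
  for D = diag(1, 1/C), and f \<mapsto> D f is a bijection of driving functions.\<close>

definition diag_conj :: "real^'n \<Rightarrow> real^'n^'n \<Rightarrow> real^'n^'n" where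
  "diag_conj d R = (\<chi> i j. d $ i * R $ i $ j / d $ j)"

definition vec_inverse :: "real^'n \<Rightarrow> real^'n" where
  "vec_inverse d = (\<chi> i. inverse (d $ i))"

lemma vec_inverse_mult_cancel:
  assumes "\<forall>i. d $ i \<noteq> 0"
  shows "vec_inverse d * (d * v) = v" "d * (vec_inverse d * v) = v"
  using assms by (simp_all add: vec_eq_iff vec_inverse_def)

lemma vec_inverse_pos: "\<forall>i. d $ i > 0 \<Longrightarrow> \<forall>i. vec_inverse d $ i > 0"
  by (simp add: vec_inverse_def)

lemma diag_conj_vec_inverse:
  assumes "\<forall>i. d $ i \<noteq> 0"
  shows "diag_conj (vec_inverse d) (diag_conj d R) = R"
  using assms by (simp add: vec_eq_iff diag_conj_def vec_inverse_def field_simps)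

lemma diag_conj_mult_vec:
  assumes "\<forall>i. d $ i \<noteq> 0"
  shows "d * (R *v m) = diag_conj d R *v (d * m)"
  using assms
  by (auto simp: vec_eq_iff matrix_vector_mult_def diag_conj_def sum_distrib_left intro!: sum.cong)

lemma continuous_on_vec_mult_left:
  fixes d :: "real^'n"
  assumes "continuous_on S f"
  shows "continuous_on S (\<lambda>t. d * f t)"
proof -
  have eq: "(\<lambda>t. d * f t) = (\<lambda>t. \<chi> i. d $ i * f t $ i)"
    by (simp add: vec_eq_iff fun_eq_iff)
  show ?thesis
    unfolding eq by (intro continuous_on_vec_lambda continuous_intros assms)
qed

lemma nonneg2_mult_iff: "\<forall>i. d $ i > 0 \<Longrightarrow> nonneg2 (d * v) \<longleftrightarrow> nonneg2 v"
  by (simp add: nonneg2_def zero_le_mult_iff less_imp_le not_le[symmetric])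

lemma driving_fun_mult:
  "\<forall>i. d $ i > 0 \<Longrightarrow> driving_fun f \<Longrightarrow> driving_fun (\<lambda>t. d * f t)"
  by (simp add: driving_fun_def nonneg2_mult_iff continuous_on_vec_mult_left)

lemma skorokhod_sol_diag_conj:
  assumes pos: "\<forall>i. d $ i > 0" and sol: "skorokhod_sol R f g m"
  shows "skorokhod_sol (diag_conj d R) (\<lambda>t. d * f t) (\<lambda>t. d * g t) (\<lambda>t. d * m t)"
proof -
  from sol have g_cont: "continuous_on {0..} g" and g_nonneg: "\<forall>t\<ge>0. nonneg2 (g t)"
    and m_cont: "continuous_on {0..} m" and m_0: "m 0 = 0"
    and g_eq: "\<forall>t\<ge>0. g t = f t + R *v m t"
    and m_mono: "\<forall>j s t. 0 \<le> s \<and> s \<le> t \<longrightarrow> m s $ j \<le> m t $ j"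
    and m_compl: "\<forall>j s t. 0 \<le> s \<and> s \<le> t \<and> (\<forall>u\<in>{s..t}. g u $ j > 0) \<longrightarrow> m s $ j = m t $ j"
    unfolding skorokhod_sol_def by blast+
  have nz: "\<forall>i. d $ i \<noteq> 0"
    using pos by (metis less_irrefl)
  have "d * g t = d * f t + diag_conj d R *v (d * m t)" if "t \<ge> 0" for t
    using g_eq that by (simp add: distrib_left diag_conj_mult_vec[OF nz])
  moreover have "(d * m s) $ j \<le> (d * m t) $ j" if "0 \<le> s" "s \<le> t" for s t j
    using m_mono that pos by simp
  moreover have "(d * m s) $ j = (d * m t) $ j"
    if "0 \<le> s" "s \<le> t" "\<forall>u\<in>{s..t}. (d * g u) $ j > 0" for s t j
  proof -
    have "\<forall>u\<in>{s..t}. g u $ j > 0"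
      using that(3) pos[rule_format, of j] by (simp add: zero_less_mult_iff)
    then show ?thesis
      using m_compl that by simp
  qed
  moreover have "\<forall>t\<ge>0. nonneg2 (d * g t)"
    using g_nonneg pos by (simp add: nonneg2_mult_iff)
  moreover have "continuous_on {0..} (\<lambda>t. d * g t)" "continuous_on {0..} (\<lambda>t. d * m t)"
    using g_cont m_cont by (simp_all add: continuous_on_vec_mult_left)
  moreover have "d * m 0 = 0"
    using m_0 by simp
  ultimately show ?thesis
    unfolding skorokhod_sol_def by blast
qed

lemma unique_solution_diag_conj:
  assumes pos: "\<forall>i. d $ i > 0" and uniq: "unique_solution R f"
  shows "unique_solution (diag_conj d R) (\<lambda>t. d * f t)"
proof -
  have nz: "\<forall>i. d $ i \<noteq> 0"
    using pos by (metis less_irrefl)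
  from uniq obtain g m where sol: "skorokhod_sol R f g m"
    and only: "\<And>g' m'. skorokhod_sol R f g' m' \<Longrightarrow> \<forall>t\<ge>0. g' t = g t \<and> m' t = m t"
    unfolding unique_solution_def by blast
  have "\<forall>t\<ge>0. g' t = d * g t \<and> m' t = d * m t"
    if sol': "skorokhod_sol (diag_conj d R) (\<lambda>t. d * f t) g' m'" for g' m'
  proof -
    have "skorokhod_sol R f (\<lambda>t. vec_inverse d * g' t) (\<lambda>t. vec_inverse d * m' t)"
      using skorokhod_sol_diag_conj[OF vec_inverse_pos[OF pos] sol']
      by (simp add: diag_conj_vec_inverse[OF nz] vec_inverse_mult_cancel[OF nz])
    from only[OF this] show ?thesis
      by (metis vec_inverse_mult_cancel(2)[OF nz])
  qed
  with skorokhod_sol_diag_conj[OF pos sol] show ?thesis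
    unfolding unique_solution_def by blast
qed

lemma all_unique_solution_diag_conj_iff:
  assumes pos: "\<forall>i. d $ i > 0"
  shows "(\<forall>f. driving_fun f \<longrightarrow> unique_solution (diag_conj d R) f) \<longleftrightarrow>
         (\<forall>f. driving_fun f \<longrightarrow> unique_solution R f)"
proof -
  have nz: "\<forall>i. d $ i \<noteq> 0"
    using pos by (metis less_irrefl)
  show ?thesis
  proof
    assume "\<forall>f. driving_fun f \<longrightarrow> unique_solution (diag_conj d R) f"
    then have "unique_solution (diag_conj (vec_inverse d) (diag_conj d R)) (\<lambda>t. vec_inverse d * (d * f t))"
      if "driving_fun f" for f
      using that pos by (simp add: unique_solution_diag_conj vec_inverse_pos driving_fun_mult)
    then show "\<forall>f. driving_fun f \<longrightarrow> unique_solution R f"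
      by (simp add: diag_conj_vec_inverse[OF nz] vec_inverse_mult_cancel[OF nz])
  next
    assume "\<forall>f. driving_fun f \<longrightarrow> unique_solution R f"
    then have "unique_solution (diag_conj d R) (\<lambda>t. d * (vec_inverse d * f t))"
      if "driving_fun f" for f
      using that pos by (simp add: unique_solution_diag_conj vec_inverse_pos driving_fun_mult)
    then show "\<forall>f. driving_fun f \<longrightarrow> unique_solution (diag_conj d R) f"
      by (simp add: vec_inverse_mult_cancel[OF nz])
  qed
qed

theorem lemma3p1:
  fixes a1 a2 C :: real
  assumes "C > 0"
  shows "(\<forall>f. driving_fun f \<longrightarrow> unique_solution (mat2 1 a1 a2 1) f) \<longleftrightarrow>
         (\<forall>f. driving_fun f \<longrightarrow> unique_solution (mat2 1 (C * a1) (a2 / C) 1) f)"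
proof -
  define d :: "real^2" where "d = (\<chi> i. if i = 1 then 1 else 1 / C)"
  have "\<forall>i. d $ i > 0"
    using assms by (simp add: d_def)
  moreover have "mat2 1 (C * a1) (a2 / C) 1 = diag_conj d (mat2 1 a1 a2 1)"
    using assms by (simp add: vec_eq_iff forall_2 d_def diag_conj_def mat2_def)
  ultimately show ?thesis
    by (simp add: all_unique_solution_diag_conj_iff)
qed

end
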